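(* Let $X,Y$ be finite-dimensional normed spaces and let $f\colon X\to Y$ be continuously open at $x^*\in X$, with maximal rate $g(r)=\Gamma_{f(x^* )}\big(f(\overline{\mathbb{B}}_r(x^* ))\big)$. Define the generalized inverse $$g^{\leftarrow}(s):=\inf\{r>0:\ g(r)\ge s\}.$$ Then for any $s$ and any $S\subset X$ satisfying $\overline{\mathbb{B}}_s(f(x^* ))\subset f(S)$, one has $$\sup_{x\in S}\|x-x^*\|\ \ge\ g^{\leftarrow}(s).$$
   Context: $\mathbb{B}_r(x)$ and $\overline{\mathbb{B}}_r(x)$ denote the open and closed balls of radius $r$ centered at $x$. For metric spaces $X,Y$ and $x\in X$, $f$ is continuously open at $x$ if there is a continuous, positive definite (i.e. $g(0)=0$, $g(r)>0$ for $r>0$), monotonically increasing function $g$ with $\mathbb{B}_{g(r)}(f(x))\subseteq f(\mathbb{B}_r(x))$ for all sufficiently small $r>0$. For a normed space $Z$, $z^*\in Z$ and $K\subseteq Z$, the inradius of $K$ at $z^*$ is $\Gamma_{z^*}(K)=\sup\{r\ge0:\mathbb{B}_r(z^* )\subseteq K\}$. *)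

theory Defs
  imports "HOL-Analysis.Analysis"
begin

definition fin_dim_space :: "'a::real_normed_vector itself \<Rightarrow> bool" where
  "fin_dim_space _ \<longleftrightarrow> (\<exists>B::'a set. finite B \<and> span B = UNIV)"

definition continuously_open_at ::
  "('a::metric_space \<Rightarrow> 'b::metric_space) \<Rightarrow> 'a \<Rightarrow> bool" where
  "continuously_open_at f x \<longleftrightarrow>
     (\<exists>g::real \<Rightarrow> real.
        continuous_on {0..} g \<and> g 0 = 0 \<and> (\<forall>r>0. g r > 0) \<and> mono_on {0..} g \<and>
        (\<exists>\<delta>>0. \<forall>r. 0 < r \<and> r < \<delta> \<longrightarrow> ball (f x) (g r) \<subseteq> f ` ball x r))"

definition inradius :: "'a::metric_space \<Rightarrow> 'a set \<Rightarrow> ereal" where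
  "inradius z K = Sup {ereal r | r. r \<ge> 0 \<and> ball z r \<subseteq> K}"

definition max_rate :: "('a::metric_space \<Rightarrow> 'b::metric_space) \<Rightarrow> 'a \<Rightarrow> real \<Rightarrow> ereal" where
  "max_rate f x r = inradius (f x) (f ` cball x r)"

text \<open>Generalized inverse: inf of the empty set is +infinity.\<close>
definition gen_inv :: "(real \<Rightarrow> ereal) \<Rightarrow> real \<Rightarrow> ereal" where
  "gen_inv g s = Inf {ereal r | r. r > 0 \<and> g r \<ge> ereal s}"

end

theory Submission
  imports Defs
begin

text \<open>If \<open>S\<close> lies in \<open>cball x r\<close>, then \<open>ball (f x) s \<subseteq> f ` S \<subseteq> f ` cball x r\<close>, so the
  maximal rate at \<open>r\<close> is at least \<open>s\<close> and hence \<open>gen_inv\<close> of it at \<open>s\<close> is at most \<open>r\<close>.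
  Applying this to every radius above the supremum of \<open>norm (x - xs)\<close> over \<open>S\<close> gives the
  bound.\<close>

lemma max_rate_ge_if_ball_subset:
  assumes "0 \<le> s" and "ball (f x) s \<subseteq> f ` cball x r"
  shows "ereal s \<le> max_rate f x r"
  unfolding max_rate_def inradius_def using assms by (intro Sup_upper) auto

lemma gen_inv_le:
  assumes "0 < r" and "ereal s \<le> g r"
  shows "gen_inv g s \<le> ereal r"
  unfolding gen_inv_def using assms by (intro Inf_lower) auto

lemma le_SUP_ereal_if_le_all_bounds:
  fixes h :: "'a \<Rightarrow> real" and c :: ereal
  assumes "S \<noteq> {}" and "\<And>x. x \<in> S \<Longrightarrow> 0 \<le> h x"
    and bounds: "\<And>r. 0 < r \<Longrightarrow> (\<And>x. x \<in> S \<Longrightarrow> h x \<le> r) \<Longrightarrow> c \<le> ereal r"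
  shows "c \<le> (SUP x\<in>S. ereal (h x))"
proof (rule ereal_le_real)
  fix z assume SUP_le: "(SUP x\<in>S. ereal (h x)) \<le> ereal z"
  have h_le: "h x \<le> z" if "x \<in> S" for x
    using order_trans[OF SUP_upper[OF that] SUP_le] by simp
  obtain x0 where "x0 \<in> S" using assms(1) by blast
  then have "0 \<le> z" using assms(2) h_le by (meson order_trans)
  show "c \<le> ereal z"
  proof (rule ereal_le_epsilon2)
    fix e :: real assume "0 < e"
    have "c \<le> ereal (z + e)"
      using \<open>0 < e\<close> \<open>0 \<le> z\<close> h_le by (intro bounds) (auto intro: add_increasing2)
    then show "c \<le> ereal z + ereal e" by simp
  qed
qed

theorem corollary2:
  fixes f :: "'a::real_normed_vector \<Rightarrow> 'b::real_normed_vector"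
    and xs :: 'a and s :: real and S :: "'a set"
  assumes "fin_dim_space TYPE('a)" and "fin_dim_space TYPE('b)"
    and "continuously_open_at f xs"
    and "0 \<le> s"
    and "cball (f xs) s \<subseteq> f ` S"
  shows "(SUP x\<in>S. ereal (norm (x - xs))) \<ge> gen_inv (max_rate f xs) s"
proof (rule le_SUP_ereal_if_le_all_bounds)
  show "S \<noteq> {}" using assms(4,5) by auto
next
  show "0 \<le> norm (x - xs)" for x by simp
next
  fix r :: real assume "0 < r" and bound: "\<And>x. x \<in> S \<Longrightarrow> norm (x - xs) \<le> r"
  have "S \<subseteq> cball xs r" using bound by (auto simp: dist_norm norm_minus_commute)
  then have "ball (f xs) s \<subseteq> f ` cball xs r" using assms(5) ball_subset_cball by blast
  then show "gen_inv (max_rate f xs) s \<le> ereal r"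
    using \<open>0 < r\<close> assms(4) by (intro gen_inv_le max_rate_ge_if_ball_subset)
qed

end
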